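(* Let $z_1,\dots,z_N$ be independent with $z_i\sim\mathrm{Bernoulli}(q_i)$, $0<q_i<1$ for every $i\in[N]$, and let $S=\sum_{i=1}^Nz_i$. If $\min_{i\in[N]}q_i>\frac1N$, then $\Pr\{S>N\min_{i\in[N]}q_i\}>\frac14$. *)

theory Defs
  imports "HOL-Probability.Probability"
begin

end

theory Submission
  imports Defs
begin

(* Let p be the smallest q i and k = nat (floor (N p)), so that the event is S >= k + 1.
   Conditioning on the last variable gives a recursion for P(S >= j) that is monotone in
   every q i, hence P(S >= k + 1) is at least the binomial tail P(Bin(N, k/N) >= k + 1).
   This tail at the mean does not decrease with N: Bin(n, k/n) is deformed into
   Bin(n + 1, k/(n + 1)) through Bin(n, (k - t)/n) + Bernoulli(t), which keeps the mean k,
   and along the way the tail has derivative (a - t) (b(k - 1) - b(k)) >= 0 because k lies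
   beyond the mode of the binomial weights b. So for k >= 2 the tail is at least its value
   (k/(k + 1))^(k + 1) >= 8/27 at N = k + 1; for k = 1 and N >= 3 it is at least
   P(Bin(3, 1/3) >= 2) = 7/27; and for N = 2 the probability is q 1 q 2 > 1/4. *)

section \<open>Tails of sums of independent Bernoulli variables\<close>

fun poisson_binomial_tail :: "(nat \<Rightarrow> real) \<Rightarrow> nat \<Rightarrow> nat \<Rightarrow> real" where
  "poisson_binomial_tail q 0 j = (if j = 0 then 1 else 0)"
| "poisson_binomial_tail q (Suc n) 0 = 1"
| "poisson_binomial_tail q (Suc n) (Suc j) =
     (1 - q (Suc n)) * poisson_binomial_tail q n (Suc j) + q (Suc n) * poisson_binomial_tail q n j"

lemma poisson_binomial_tail_0_right [simp]: "poisson_binomial_tail q n 0 = 1"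
  by (cases n) auto

lemma poisson_binomial_tail_eq_0: "n < j \<Longrightarrow> poisson_binomial_tail q n j = 0"
proof (induction n arbitrary: j)
  case (Suc n)
  then obtain j' where "j = Suc j'" "n < j'" by (cases j) auto
  with Suc.IH show ?case by simp
qed simp

lemma poisson_binomial_tail_bounds:
  assumes "\<forall>i\<in>{1..n}. 0 \<le> q i \<and> q i \<le> 1"
  shows "0 \<le> poisson_binomial_tail q n j \<and> poisson_binomial_tail q n j \<le> 1"
  using assms
proof (induction n arbitrary: j)
  case (Suc n)
  then have IH: "0 \<le> poisson_binomial_tail q n j \<and> poisson_binomial_tail q n j \<le> 1" for j
    by simp
  have q: "0 \<le> q (Suc n)" "q (Suc n) \<le> 1"
    using Suc.prems by auto
  show ?case
  proof (cases j)
    case (Suc j')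
    have "(1 - q (Suc n)) * poisson_binomial_tail q n j + q (Suc n) * poisson_binomial_tail q n j'
        \<le> (1 - q (Suc n)) * 1 + q (Suc n) * 1"
      using IH q by (intro add_mono mult_left_mono) auto
    with IH q Suc show ?thesis by simp
  qed simp
qed simp

lemma poisson_binomial_tail_Suc_le:
  assumes "\<forall>i\<in>{1..n}. 0 \<le> q i \<and> q i \<le> 1"
  shows "poisson_binomial_tail q n (Suc j) \<le> poisson_binomial_tail q n j"
  using assms
proof (induction n arbitrary: j)
  case (Suc n)
  have q: "0 \<le> q (Suc n)" "q (Suc n) \<le> 1"
    using Suc.prems by auto
  show ?case
  proof (cases j)
    case 0
    with poisson_binomial_tail_bounds[OF Suc.prems, of 1] show ?thesis by simp
  next
    case (Suc j')
    have "(1 - q (Suc n)) * poisson_binomial_tail q n (Suc j) + q (Suc n) * poisson_binomial_tail q n j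
        \<le> (1 - q (Suc n)) * poisson_binomial_tail q n j + q (Suc n) * poisson_binomial_tail q n j'"
      using Suc.IH Suc.prems q Suc by (intro add_mono mult_left_mono) auto
    with Suc show ?thesis by simp
  qed
qed simp

lemma poisson_binomial_tail_mono:
  assumes "\<forall>i\<in>{1..n}. 0 \<le> p i \<and> p i \<le> q i \<and> q i \<le> 1"
  shows "poisson_binomial_tail p n j \<le> poisson_binomial_tail q n j"
  using assms
proof (induction n arbitrary: j)
  case (Suc n)
  have q_bounds: "\<forall>i\<in>{1..n}. 0 \<le> q i \<and> q i \<le> 1"
  proof
    fix i assume "i \<in> {1..n}"
    with Suc.prems have "0 \<le> p i \<and> p i \<le> q i \<and> q i \<le> 1" by simp
    then show "0 \<le> q i \<and> q i \<le> 1" by linarith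
  qed
  have pq: "0 \<le> p (Suc n)" "p (Suc n) \<le> q (Suc n)" "q (Suc n) \<le> 1"
    using Suc.prems by auto
  then have "p (Suc n) \<le> 1"
    by linarith
  show ?case
  proof (cases j)
    case (Suc j')
    let ?P = "poisson_binomial_tail p n" and ?Q = "poisson_binomial_tail q n"
    have "(1 - p (Suc n)) * ?P j + p (Suc n) * ?P j' \<le> (1 - p (Suc n)) * ?Q j + p (Suc n) * ?Q j'"
      using Suc.IH Suc.prems pq \<open>p (Suc n) \<le> 1\<close> by (intro add_mono mult_left_mono) auto
    also have "\<dots> \<le> (1 - q (Suc n)) * ?Q j + q (Suc n) * ?Q j'"
    proof -
      have "(q (Suc n) - p (Suc n)) * ?Q j \<le> (q (Suc n) - p (Suc n)) * ?Q j'"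
        using poisson_binomial_tail_Suc_le[OF q_bounds] pq Suc by (intro mult_left_mono) auto
      then show ?thesis by (simp add: algebra_simps)
    qed
    finally show ?thesis using Suc by simp
  qed simp
qed simp

section \<open>Binomial tails at the mean\<close>

abbreviation binomial_tail :: "real \<Rightarrow> nat \<Rightarrow> nat \<Rightarrow> real" where
  "binomial_tail a \<equiv> poisson_binomial_tail (\<lambda>_. a)"

definition binomial_mass :: "real \<Rightarrow> nat \<Rightarrow> nat \<Rightarrow> real" where
  "binomial_mass a n j = real (n choose j) * a ^ j * (1 - a) ^ (n - j)"

lemma binomial_mass_nonneg: "0 \<le> a \<Longrightarrow> a \<le> 1 \<Longrightarrow> 0 \<le> binomial_mass a n j"
  by (simp add: binomial_mass_def)

lemma binomial_mass_Suc_0: "binomial_mass a (Suc n) 0 = (1 - a) * binomial_mass a n 0"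
  by (simp add: binomial_mass_def)

lemma binomial_mass_Suc_Suc:
  "binomial_mass a (Suc n) (Suc j) = (1 - a) * binomial_mass a n (Suc j) + a * binomial_mass a n j"
proof (cases "j < n")
  case True
  then have power_eq: "(1 - a) ^ (n - j) = (1 - a) * (1 - a) ^ (n - Suc j)"
    by (simp flip: power_Suc add: Suc_diff_Suc)
  show ?thesis
    unfolding binomial_mass_def binomial_Suc_Suc diff_Suc_Suc power_eq by (simp add: algebra_simps)
next
  case False
  then show ?thesis
    by (simp add: binomial_mass_def algebra_simps)
qed

lemma binomial_tail_diff: "binomial_tail a n j - binomial_tail a n (Suc j) = binomial_mass a n j"
proof (induction n arbitrary: j)
  case 0
  then show ?case by (simp add: binomial_mass_def)
next
  case (Suc n)
  let ?T = "binomial_tail a n"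
  show ?case
  proof (cases j)
    case 0
    have "binomial_tail a (Suc n) 0 - binomial_tail a (Suc n) 1 = (1 - a) * (?T 0 - ?T 1)"
      by (simp add: algebra_simps)
    then show ?thesis
      using 0 Suc.IH[of 0] by (simp add: binomial_mass_Suc_0)
  next
    case (Suc j')
    have "binomial_tail a (Suc n) j - binomial_tail a (Suc n) (Suc j)
        = (1 - a) * (?T j - ?T (Suc j)) + a * (?T j' - ?T j)"
      using Suc by (simp add: algebra_simps)
    then show ?thesis
      using Suc Suc.IH by (simp add: binomial_mass_Suc_Suc)
  qed
qed

lemma binomial_tail_diag: "binomial_tail a n n = a ^ n"
  by (induction n) (simp_all add: poisson_binomial_tail_eq_0)

lemma binomial_tail_has_real_derivative:
  "((\<lambda>a. binomial_tail a n (Suc j)) has_real_derivative real n * binomial_mass a (n - 1) j) (at a)"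
proof (induction n arbitrary: j)
  case 0
  show ?case by simp
next
  case (Suc n)
  have IH: "((\<lambda>a. binomial_tail a n i) has_real_derivative
      (if i = 0 then 0 else real n * binomial_mass a (n - 1) (i - 1))) (at a)" for i
    using Suc.IH[of "i - 1"] by (cases i) simp_all
  have "((\<lambda>a. (1 - a) * binomial_tail a n (Suc j) + a * binomial_tail a n j) has_real_derivative
      (1 - a) * (real n * binomial_mass a (n - 1) j) - binomial_tail a n (Suc j)
      + a * (if j = 0 then 0 else real n * binomial_mass a (n - 1) (j - 1)) + binomial_tail a n j) (at a)"
    using Suc.IH[of j] IH[of j] by (auto intro!: derivative_eq_intros)
  moreover have "(1 - a) * (real n * binomial_mass a (n - 1) j) - binomial_tail a n (Suc j)
      + a * (if j = 0 then 0 else real n * binomial_mass a (n - 1) (j - 1)) + binomial_tail a n j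
      = real (Suc n) * binomial_mass a n j"
  proof -
    have "real n * binomial_mass a n j = real n * ((1 - a) * binomial_mass a (n - 1) j
        + (if j = 0 then 0 else a * binomial_mass a (n - 1) (j - 1)))"
      by (cases n; cases j) (simp_all add: binomial_mass_Suc_0 binomial_mass_Suc_Suc)
    with binomial_tail_diff[of a n j] show ?thesis
      by (simp add: algebra_simps)
  qed
  ultimately show ?case
    by simp
qed

lemma binomial_mass_le_pred:
  assumes "0 < k" "0 \<le> a" "a < 1" "real (Suc m) * a \<le> real k"
  shows "binomial_mass a m k \<le> binomial_mass a m (k - 1)"
proof (cases "k \<le> m")
  case False
  then have "binomial_mass a m k = 0"
    by (simp add: binomial_mass_def)
  with binomial_mass_nonneg[of a m "k - 1"] assms show ?thesis
    by simp
next
  case True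
  then obtain i d where k: "k = Suc i" and m: "m = Suc (i + d)"
    using assms(1) by (metis Suc_pred add_Suc le_Suc_ex)
  have "Suc i * (m choose Suc i) = Suc d * (m choose i)"
    using Suc_times_binomial_add[of i d] by (simp only: m)
  then have choose: "real (Suc i) * real (m choose Suc i) = real (Suc d) * real (m choose i)"
    by (metis of_nat_mult)
  have exps: "m - Suc i = d" "m - i = Suc d"
    using m by simp_all
  have "real k * (1 - a) * binomial_mass a m k
      = real (Suc i) * real (m choose Suc i) * a ^ Suc i * (1 - a) ^ Suc d"
    unfolding binomial_mass_def k exps by (simp add: algebra_simps)
  also have "\<dots> = real (Suc d) * a * binomial_mass a m (k - 1)"
    unfolding binomial_mass_def k diff_Suc_1 exps choose by (simp add: algebra_simps)
  also have "\<dots> \<le> real k * (1 - a) * binomial_mass a m (k - 1)"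
    using assms binomial_mass_nonneg[of a m "k - 1"] unfolding k m
    by (intro mult_right_mono) (simp_all add: algebra_simps)
  finally show ?thesis
    using assms by (simp add: mult_le_cancel_left_pos)
qed

(* P(X + Y >= k + 1) for independent X ~ Bin(n, (k - t)/n) and Y ~ Bernoulli(t): the mean
   stays k, and t = 0 and t = k/(n + 1) give Bin(n, k/n) and Bin(n + 1, k/(n + 1)). *)
definition binomial_mixture_tail :: "nat \<Rightarrow> nat \<Rightarrow> real \<Rightarrow> real" where
  "binomial_mixture_tail n k t =
     (1 - t) * binomial_tail ((real k - t) / real n) n (Suc k) + t * binomial_tail ((real k - t) / real n) n k"

lemma binomial_mixture_tail_has_real_derivative:
  fixes k m :: nat and t :: real
  assumes "0 < k"
  defines "a \<equiv> (real k - t) / real (Suc m)"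
  shows "(binomial_mixture_tail (Suc m) k has_real_derivative
           (a - t) * (binomial_mass a m (k - 1) - binomial_mass a m k)) (at t)"
proof -
  have tail_deriv: "((\<lambda>t. binomial_tail ((real k - t) / real (Suc m)) (Suc m) (Suc j))
      has_real_derivative - binomial_mass a m j) (at t)" for j
  proof -
    have "((\<lambda>t. (real k - t) / real (Suc m)) has_real_derivative (0 - 1) / real (Suc m)) (at t)"
      by (intro DERIV_cdivide DERIV_diff DERIV_const DERIV_ident)
    from DERIV_chain2[OF binomial_tail_has_real_derivative[of "Suc m" j] this]
    show ?thesis
      by (rule DERIV_cong) (simp add: a_def)
  qed
  have tail_deriv_k: "((\<lambda>t. binomial_tail ((real k - t) / real (Suc m)) (Suc m) k)
      has_real_derivative - binomial_mass a m (k - 1)) (at t)"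
    using tail_deriv[of "k - 1"] assms(1) by simp
  have tail_k: "binomial_tail a (Suc m) k
      = binomial_tail a (Suc m) (Suc k) + (1 - a) * binomial_mass a m k + a * binomial_mass a m (k - 1)"
    using binomial_tail_diff[of a "Suc m" k] binomial_mass_Suc_Suc[of a m "k - 1"] assms(1) by simp
  have "(binomial_mixture_tail (Suc m) k has_real_derivative
      - (1 - t) * binomial_mass a m k - binomial_tail a (Suc m) (Suc k)
      - t * binomial_mass a m (k - 1) + binomial_tail a (Suc m) k) (at t)"
    unfolding binomial_mixture_tail_def[abs_def]
    using tail_deriv[of k] tail_deriv_k
    by (auto intro!: derivative_eq_intros simp: a_def algebra_simps simp del: poisson_binomial_tail.simps)
  then show ?thesis
    by (rule DERIV_cong) (simp add: tail_k algebra_simps del: poisson_binomial_tail.simps)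
qed

lemma binomial_tail_at_mean_le_Suc:
  assumes "0 < k" "k \<le> m"
  shows "binomial_tail (real k / real (Suc m)) (Suc m) (Suc k)
       \<le> binomial_tail (real k / real (Suc (Suc m))) (Suc (Suc m)) (Suc k)"
proof -
  define c where "c = real k / real (Suc (Suc m))"
  have "real k - c = real (Suc m) * c"
    unfolding c_def by (simp add: field_simps)
  then have c_fixed: "(real k - c) / real (Suc m) = c"
    by simp
  have "binomial_mixture_tail (Suc m) k 0 \<le> binomial_mixture_tail (Suc m) k c"
  proof (rule DERIV_nonneg_imp_nondecreasing[of 0 c "binomial_mixture_tail (Suc m) k"])
    show "0 \<le> c"
      unfolding c_def by simp
    fix t assume t: "0 \<le> t" "t \<le> c"
    define a where "a = (real k - t) / real (Suc m)"
    have "t \<le> a"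
      using t unfolding a_def c_def by (simp add: field_simps)
    have "c \<le> real k"
      unfolding c_def by (simp add: field_simps)
    with t assms have "0 \<le> a" "a < 1" "real (Suc m) * a \<le> real k"
      unfolding a_def by (simp_all add: field_simps)
    with assms(1) have "binomial_mass a m k \<le> binomial_mass a m (k - 1)"
      by (intro binomial_mass_le_pred)
    with \<open>t \<le> a\<close> binomial_mixture_tail_has_real_derivative[OF assms(1), of m t]
    show "\<exists>y. (binomial_mixture_tail (Suc m) k has_real_derivative y) (at t) \<and> 0 \<le> y"
      unfolding a_def by fastforce
  qed
  moreover have "binomial_mixture_tail (Suc m) k c = binomial_tail c (Suc (Suc m)) (Suc k)"
    unfolding binomial_mixture_tail_def c_fixed by simp
  ultimately show ?thesis
    unfolding c_def by (simp add: binomial_mixture_tail_def)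
qed

lemma binomial_tail_at_mean_mono:
  assumes "0 < k" "k < n" "n \<le> n'"
  shows "binomial_tail (real k / real n) n (Suc k) \<le> binomial_tail (real k / real n') n' (Suc k)"
  using assms(3)
proof (induction n' rule: dec_induct)
  case (step n')
  with assms obtain m where "n' = Suc m" "k \<le> m"
    by (cases n') auto
  with assms(1) step.IH binomial_tail_at_mean_le_Suc[of k m] show ?case
    by simp
qed simp

lemma power_ratio_le_Suc:
  "(real k / real (Suc k)) ^ Suc k \<le> (real (Suc k) / real (Suc (Suc k))) ^ Suc (Suc k)"
proof (cases "k = 0")
  case False
  define y where "y = real k"
  define x where "x = 1 / (y * (y + 2))"
  define u where "u = y / (y + 1)"
  define v where "v = (y + 1) / (y + 2)"
  have "y > 0" "x \<ge> 0" "u \<ge> 0"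
    using False by (simp_all add: y_def x_def u_def)
  \<comment> \<open>\<open>v = u (1 + x)\<close>, so Bernoulli's inequality reduces the claim to \<open>v (1 + (k + 1) x) \<ge> 1\<close>\<close>
  have v_eq: "v = u * (1 + x)"
    using \<open>y > 0\<close> unfolding u_def v_def x_def
    by (simp add: divide_simps) (simp add: algebra_simps)
  have v_bound: "1 \<le> v * (1 + real (Suc k) * x)"
    using \<open>y > 0\<close> unfolding v_def x_def of_nat_Suc y_def[symmetric]
    by (simp add: divide_simps) (simp add: algebra_simps)
  have "u ^ Suc k \<le> v * (1 + real (Suc k) * x) * u ^ Suc k"
    using mult_right_mono[OF v_bound zero_le_power[OF \<open>u \<ge> 0\<close>, of "Suc k"]] by simp
  also have "\<dots> \<le> v * (1 + x) ^ Suc k * u ^ Suc k"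
    using Bernoulli_inequality[of x "Suc k"] \<open>x \<ge> 0\<close> \<open>u \<ge> 0\<close> \<open>y > 0\<close>
    by (intro mult_right_mono mult_left_mono) (simp_all add: v_def)
  also have "\<dots> = v * (u * (1 + x)) ^ Suc k"
    by (simp only: power_mult_distrib mult_ac)
  also have "\<dots> = v ^ Suc (Suc k)"
    by (simp flip: v_eq)
  finally show ?thesis
    unfolding u_def v_def y_def by (simp add: add.commute)
qed simp

lemma power_ratio_ge_8_27:
  assumes "2 \<le> k"
  shows "8 / 27 \<le> (real k / real (Suc k)) ^ Suc k"
  using assms
proof (induction k rule: dec_induct)
  case base
  then show ?case by (simp add: power_divide)
next
  case (step i)
  show ?case
    by (rule order.trans[OF step.IH power_ratio_le_Suc])
qed

lemma quarter_lt_binomial_tail_at_mean: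
  assumes "0 < k" "k < n" "3 \<le> n"
  shows "1 / 4 < binomial_tail (real k / real n) n (Suc k)"
proof (cases "k = 1")
  case True
  have "binomial_tail (real 1 / real 3) 3 (Suc 1) \<le> binomial_tail (real 1 / real n) n (Suc 1)"
    using assms(3) by (intro binomial_tail_at_mean_mono) simp_all
  moreover have "binomial_tail (real 1 / real 3) 3 (Suc 1) = 7 / 27"
    by (simp add: numeral_eq_Suc)
  ultimately show ?thesis
    using True by simp
next
  case False
  have "binomial_tail (real k / real (Suc k)) (Suc k) (Suc k) \<le> binomial_tail (real k / real n) n (Suc k)"
    using assms by (intro binomial_tail_at_mean_mono) simp_all
  moreover have "8 / 27 \<le> binomial_tail (real k / real (Suc k)) (Suc k) (Suc k)"
    unfolding binomial_tail_diag using False assms(1) by (intro power_ratio_ge_8_27) simp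
  ultimately show ?thesis
    by simp
qed

lemma quarter_lt_poisson_binomial_tail:
  assumes "1 < real n * p" "p < 1" "\<forall>i\<in>{1..n}. p \<le> q i \<and> q i \<le> 1"
  shows "1 / 4 < poisson_binomial_tail q n (Suc (nat \<lfloor>real n * p\<rfloor>))"
proof -
  define k where "k = nat \<lfloor>real n * p\<rfloor>"
  have "0 < n"
    using assms(1) by (cases n) auto
  with assms(2) have "real n * p < real n"
    by simp
  then have "0 < k" "k < n" "real k \<le> real n * p"
    using assms(1) unfolding k_def by linarith+
  then have "real k / real n \<le> p"
    by (simp add: field_simps)
  show ?thesis
  proof (cases "n = 2")
    case True
    with \<open>0 < k\<close> \<open>k < n\<close> have "k = 1"
      by simp
    have "1 / 2 < q i" if "i \<in> {1..2}" for i
      using assms(1,3) that True by fastforce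
    from this[of 1] this[of 2] have "1 / 2 * (1 / 2) < q 2 * q 1"
      by (intro mult_strict_mono) simp_all
    with True \<open>k = 1\<close> show ?thesis
      unfolding k_def[symmetric] by (simp add: numeral_eq_Suc)
  next
    case False
    with \<open>0 < k\<close> \<open>k < n\<close> have "3 \<le> n"
      by simp
    have "binomial_tail (real k / real n) n (Suc k) \<le> poisson_binomial_tail q n (Suc k)"
      using assms(3) \<open>real k / real n \<le> p\<close> by (intro poisson_binomial_tail_mono) auto
    with quarter_lt_binomial_tail_at_mean[OF \<open>0 < k\<close> \<open>k < n\<close> \<open>3 \<le> n\<close>] show ?thesis
      unfolding k_def by simp
  qed
qed

section \<open>The probabilistic reading of the recursion\<close>

lemma card_filter_atLeastAtMost_Suc:
  "card {i \<in> {1..Suc n}. P i} = card {i \<in> {1..n}. P i} + (if P (Suc n) then 1 else 0)"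
proof -
  have "{i \<in> {1..Suc n}. P i} = {i \<in> {1..n}. P i} \<union> (if P (Suc n) then {Suc n} else {})"
    by (auto simp: le_Suc_eq)
  then show ?thesis
    by (simp add: card_Un_disjoint)
qed

lemma measurable_card_filter:
  fixes I :: "nat set"
  assumes "\<And>i. i \<in> I \<Longrightarrow> z i \<in> measurable M (count_space UNIV)"
  shows "(\<lambda>x. card {i \<in> I. z i x}) \<in> measurable M (count_space UNIV)"
proof (rule measurable_card)
  fix i
  show "{x \<in> space M. i \<in> {i \<in> I. z i x}} \<in> sets M"
  proof (cases "i \<in> I")
    case True
    with assms have [measurable]: "z i \<in> measurable M (count_space UNIV)" .
    from True show ?thesis
      by simp
  qed simp
qed

context prob_space
begin

lemma prob_card_and_next_eq_prod:
  fixes z :: "nat \<Rightarrow> 'a \<Rightarrow> bool"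
  assumes "indep_vars (\<lambda>_. count_space UNIV) z {1..N}" "Suc n \<le> N"
  shows "prob {x \<in> space M. P (card {i \<in> {1..n}. z i x}) \<and> z (Suc n) x = b}
       = prob {x \<in> space M. P (card {i \<in> {1..n}. z i x})} * prob {x \<in> space M. z (Suc n) x = b}"
proof -
  have "indep_var
      (count_space UNIV) ((\<lambda>f. P (card {i \<in> {1..n}. f i})) \<circ> (\<lambda>x. restrict (\<lambda>i. z i x) {1..n}))
      (count_space UNIV) ((\<lambda>f. f (Suc n) = b) \<circ> (\<lambda>x. restrict (\<lambda>i. z i x) {Suc n}))"
    using assms by (intro indep_var_compose[OF indep_var_restrict[OF assms(1)]]) auto
  also have "(\<lambda>f. P (card {i \<in> {1..n}. f i})) \<circ> (\<lambda>x. restrict (\<lambda>i. z i x) {1..n})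
      = (\<lambda>x. P (card {i \<in> {1..n}. z i x}))"
    by (auto simp: fun_eq_iff intro!: arg_cong[where f = P] arg_cong[where f = card])
  also have "(\<lambda>f. f (Suc n) = b) \<circ> (\<lambda>x. restrict (\<lambda>i. z i x) {Suc n}) = (\<lambda>x. z (Suc n) x = b)"
    by auto
  finally have "indep_var (count_space UNIV) (\<lambda>x. P (card {i \<in> {1..n}. z i x}))
      (count_space UNIV) (\<lambda>x. z (Suc n) x = b)" .
  from indep_varD[OF this, of "{True}" "{True}"] show ?thesis
    by (simp add: vimage_def Int_def conj_commute)
qed

lemma prob_card_ge_eq_poisson_binomial_tail:
  fixes z :: "nat \<Rightarrow> 'a \<Rightarrow> bool"
  assumes indep: "indep_vars (\<lambda>_. count_space UNIV) z {1..N}"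
    and prob_z: "\<And>i. i \<in> {1..N} \<Longrightarrow> prob {x \<in> space M. z i x} = q i"
    and "n \<le> N"
  shows "prob {x \<in> space M. j \<le> card {i \<in> {1..n}. z i x}} = poisson_binomial_tail q n j"
  using \<open>n \<le> N\<close>
proof (induction n arbitrary: j)
  case 0
  then show ?case
    by (cases j) (auto simp: prob_space)
next
  case (Suc n)
  have z_measurable: "z i \<in> measurable M (count_space UNIV)" if "i \<in> {1..N}" for i
    using indep that by (auto simp: indep_vars_def)
  then have [measurable]: "(\<lambda>x. card {i \<in> {1..n}. z i x}) \<in> measurable M (count_space UNIV)"
    using Suc.prems by (intro measurable_card_filter) auto
  have [measurable]: "z (Suc n) \<in> measurable M (count_space UNIV)"
    using Suc.prems by (intro z_measurable) auto
  have events: "{x \<in> space M. c \<le> card {i \<in> {1..n}. z i x} \<and> z (Suc n) x = b} \<in> events" for c b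
    by measurable
  have joint: "prob {x \<in> space M. c \<le> card {i \<in> {1..n}. z i x} \<and> z (Suc n) x = b}
      = poisson_binomial_tail q n c * prob {x \<in> space M. z (Suc n) x = b}" for c b
    using prob_card_and_next_eq_prod[OF indep Suc.prems] Suc.IH Suc.prems by simp
  have "prob {x \<in> space M. z (Suc n) x = True} = q (Suc n)"
    using prob_z[of "Suc n"] Suc.prems by simp
  moreover have "prob {x \<in> space M. z (Suc n) x = False} = 1 - prob {x \<in> space M. z (Suc n) x}"
    by (subst prob_compl[symmetric]) (auto intro!: arg_cong[where f = prob])
  ultimately have next_prob:
      "prob {x \<in> space M. z (Suc n) x = b} = (if b then q (Suc n) else 1 - q (Suc n))" for b
    by (cases b) simp_all
  show ?case
  proof (cases j)
    case (Suc j')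
    have "{x \<in> space M. j \<le> card {i \<in> {1..Suc n}. z i x}}
        = {x \<in> space M. Suc j' \<le> card {i \<in> {1..n}. z i x} \<and> z (Suc n) x = False}
          \<union> {x \<in> space M. j' \<le> card {i \<in> {1..n}. z i x} \<and> z (Suc n) x = True}"
      unfolding card_filter_atLeastAtMost_Suc Suc by auto
    then have "prob {x \<in> space M. j \<le> card {i \<in> {1..Suc n}. z i x}}
        = prob {x \<in> space M. Suc j' \<le> card {i \<in> {1..n}. z i x} \<and> z (Suc n) x = False}
          + prob {x \<in> space M. j' \<le> card {i \<in> {1..n}. z i x} \<and> z (Suc n) x = True}"
      by (simp only:) (rule finite_measure_Union[OF events events], auto)
    with Suc show ?thesis
      unfolding joint next_prob by (simp add: mult.commute)
  qed (simp add: prob_space)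
qed

end

lemma sum_indicator_eq_card:
  "finite A \<Longrightarrow> (\<Sum>i\<in>A. if P i then 1 else 0 :: real) = real (card {i \<in> A. P i})"
  by (simp add: sum.If_cases Int_def)

lemma less_of_nat_iff_Suc_nat_floor_le:
  fixes t :: real
  assumes "0 \<le> t"
  shows "t < real c \<longleftrightarrow> Suc (nat \<lfloor>t\<rfloor>) \<le> c"
  using assms by linarith

theorem lemma11:
  fixes M :: "'a measure" and N :: nat and q :: "nat \<Rightarrow> real"
    and z :: "nat \<Rightarrow> 'a \<Rightarrow> bool"
  assumes "prob_space M"
    and "N \<ge> 1"
    and "prob_space.indep_vars M (\<lambda>_. count_space UNIV) z {1..N}"
    and "\<And>i. i \<in> {1..N} \<Longrightarrow> prob_space.prob M {x \<in> space M. z i x} = q i"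
    and "\<And>i. i \<in> {1..N} \<Longrightarrow> 0 < q i \<and> q i < 1"
    and "(MIN i\<in>{1..N}. q i) > 1 / real N"
  shows "prob_space.prob M
           {x \<in> space M. (\<Sum>i=1..N. (if z i x then 1 else 0 :: real)) > real N * (MIN i\<in>{1..N}. q i)}
         > 1 / 4"
proof -
  interpret prob_space M
    by (rule assms(1))
  define p where "p = (MIN i\<in>{1..N}. q i)"
  have "p \<in> q ` {1..N}"
    unfolding p_def using assms(2) by (intro Min_in) auto
  with assms(5) have "p < 1"
    by auto
  have p_le: "\<forall>i\<in>{1..N}. p \<le> q i \<and> q i \<le> 1"
    unfolding p_def using assms(5) by (auto intro: less_imp_le)
  have "1 < real N * p"
    using assms(2,6) unfolding p_def[symmetric] by (simp add: field_simps)
  then have "{x \<in> space M. (\<Sum>i=1..N. (if z i x then 1 else 0 :: real)) > real N * p}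
      = {x \<in> space M. Suc (nat \<lfloor>real N * p\<rfloor>) \<le> card {i \<in> {1..N}. z i x}}"
    by (simp add: sum_indicator_eq_card less_of_nat_iff_Suc_nat_floor_le)
  moreover have "prob {x \<in> space M. Suc (nat \<lfloor>real N * p\<rfloor>) \<le> card {i \<in> {1..N}. z i x}}
      = poisson_binomial_tail q N (Suc (nat \<lfloor>real N * p\<rfloor>))"
    using assms(3,4) by (intro prob_card_ge_eq_poisson_binomial_tail) auto
  ultimately show ?thesis
    using quarter_lt_poisson_binomial_tail[OF \<open>1 < real N * p\<close> \<open>p < 1\<close> p_le]
    unfolding p_def by simp
qed

end
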